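(* Let $F$ be the class of all two-sorted term-modal frames (for the fixed agent set $\mathcal{A}$). For every formula $\varphi$ of the language $\mathcal{L}$: if $\vdash_{\mathbf{K}_{TM}}\varphi$, then $\models_F\varphi$, i.e. $\varphi$ is valid on every frame in $F$.
   Context: Fix a finite nonempty set of agents $\mathcal{A}=\{\alpha_1,\dots,\alpha_n\}$ and two sorts $agt$, $obj$. The language $\mathcal{L}$ has: countably infinite sets $VAR_{agt}$, $VAR_{obj}$ of variables; a countable (possibly empty) set of constants, each with a sort; a countable (possibly empty) set of function symbols, each with an arity $\alpha\in\{agt,obj\}^{k+1}$, $k\ge 0$ (first $k$ entries: argument sorts; last entry: value sort); a countable (possibly empty) set of relation symbols, each with an arity $\beta\in\{agt,obj\}^k$, $k\ge 1$; the symbol $=$; $\neg,\to$; $\forall$; and a modal operator $K_t$ for every agent-sorted term $t$. Terms: variables, constants, and $f(t_1,\dots,t_k)$ with $t_i$ of sort $\alpha_i$ (of sort $\alpha_{k+1}$). Formulas: $t_1=t_2$ (any terms), $P(t_1,\dots,t_k)$ ($t_i$ of sort $\beta_i$), $\neg\varphi$, $\varphi\to\psi$, $\forall x\varphi$, $K_t\varphi$ ($t$ agent-sorted). Other connectives as usual, $\exists x:=\neg\forall x\neg$, $P_t:=\neg K_t\neg$. Free variables as usual, except that the free variables of $K_t\varphi$ are those of $t$ together with those of $\varphi$. $\varphi(t/x)$ denotes substitution of $t$ for the free occurrences of $x$ (renaming bound variables so no variable of $t$ becomes bound). A frame is $\langle W,\mathcal{R},DOM\rangle$ with $W\neq\emptyset$,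 $\mathcal{R}:\mathcal{A}\to\mathcal{P}(W\times W)$, and $DOM=DOM_{agt}\sqcup DOM_{obj}$ a disjoint union of nonempty sets with $DOM_{agt}=\mathcal{A}$. An interpretation $\mathcal{I}$ assigns to each relation symbol $P$ of arity $\beta$ and world $w$ a set $\mathcal{I}(P,w)\subseteq\prod_{i=1}^k DOM_{\beta_i}$; to each function symbol $f$ of arity $\alpha$ and $w$ a set $\mathcal{I}(f,w)\subseteq\prod_{i=1}^{k+1}DOM_{\alpha_i}$; $\mathcal{I}(=,w)=\{(d,d):d\in DOM\}$; to each constant $c$ of sort $\sigma$ and $w$ an element $\mathcal{I}(c,w)\in DOM_\sigma$. A model is a frame plus an interpretation (it is "based on" the frame). A valuation $v$ maps each $VAR_\sigma$ surjectively onto $DOM_\sigma$; an $x$-variant of $v$ agrees with $v$ except possibly at $x$. Extensions: $t^{w,v}=v(t)$ for a variable, $\mathcal{I}(t,w)$ for a constant. Truth: $\mathcal M,w\models_v P(t_1,\dots,t_k)$ iff $(t_1^{w,v},\dots,t_k^{w,v})\in\mathcal{I}(P,w)$; $\mathcal M,w\models_v t_1=t_2$ iff $t_1^{w,v}=t_2^{w,v}$; $\neg,\to$ classically; $\mathcal M,w\models_v\forall x\varphi$ iff $\mathcal M,w\models_{v'}\varphi$ for every $x$-variant $v'$ of $v$; $\mathcal M,w\models_v K_t\varphi$ iff $\mathcal M,w'\models_v\varphi$ for all $w'$ with $(w,w')\in\mathcal{R}(t^{w,v})$. A formula is valid in a frame if it is true at every world under every valuation in every model based on the frame; valid on a class of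 frames if valid in each of its frames. The system $\mathbf{K}_{TM}$: axioms are all substitution instances (by formulas of $\mathcal L$) of valid formulas of propositional modal logic, together with: ($\forall$) $\forall x\varphi\to\varphi(y/x)$ for any formula $\varphi$ and variable $y$ free in $\varphi$; (Id) $t=t$ for every term $t$; (MSD) $x\neq y$ for $x\in VAR_{agt}$, $y\in VAR_{obj}$; (PS) $(x=y)\to(\varphi(x)\to\varphi(y))$ for variables $x,y$ and formulas $\varphi$ (with $x,y$ agent-sorted when they occur as modal indices); ($\exists$Id) $(c=c)\to\exists x(x=c)$ for every constant $c$; (N) $\exists x_1\cdots\exists x_n\big(x_1\neq x_2\wedge\dots\wedge x_{n-1}\neq x_n\wedge\forall y(y=x_1\vee\dots\vee y=x_n)\big)$ for agent variables $x_1,\dots,x_n,y$, $n=|\mathcal A|$; (K) $K_t(\varphi\to\psi)\to(K_t\varphi\to K_t\psi)$; (BF) $\forall xK_t\varphi\to K_t\forall x\varphi$ for agent-sorted $t$ and variable $x\neq t$; (KNI) $(x\neq y)\to K_t(x\neq y)$ for variables $x,y$ and agent-sorted $t$. Rules: modus ponens; (KG) from $\varphi$ infer $K_t\varphi$ for agent-sorted $t$; (Gen) from $\varphi\to\psi$ infer $\varphi\to\forall x\psi$ when $x$ is not free in $\varphi$. $\vdash_{\mathbf{K}_{TM}}\varphi$ means $\varphi$ is the last line of a finite sequence each of whose members is an axiom or follows from earlier ones by a rule. *)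

theory Defs
  imports Main "HOL-Library.Countable_Set"
begin

datatype sort = Agt | Obj

datatype var = Vr sort nat

fun vsort :: "var \<Rightarrow> sort" where
  "vsort (Vr s n) = s"

datatype ('c, 'f) trm = TV var | TC 'c | TF 'f "('c, 'f) trm list"

datatype ('c, 'f, 'p) fm =
    Eq "('c, 'f) trm" "('c, 'f) trm"
  | Rel 'p "('c, 'f) trm list"
  | Neg "('c, 'f, 'p) fm"
  | Imp "('c, 'f, 'p) fm" "('c, 'f, 'p) fm"
  | All var "('c, 'f, 'p) fm"
  | Kn "('c, 'f) trm" "('c, 'f, 'p) fm"

text \<open>Signature: partial maps; a symbol is in the language iff its entry is Some.\<close>
record ('c, 'f, 'p) sig =
  csig :: "'c \<Rightarrow> sort option"
  fsig :: "'f \<Rightarrow> (sort list \<times> sort) option"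
  psig :: "'p \<Rightarrow> sort list option"

definition wf_sig :: "('c, 'f, 'p) sig \<Rightarrow> bool" where
  "wf_sig S \<longleftrightarrow> countable (dom (csig S)) \<and> countable (dom (fsig S)) \<and>
     countable (dom (psig S)) \<and> (\<forall>p \<beta>. psig S p = Some \<beta> \<longrightarrow> \<beta> \<noteq> [])"

fun tsort :: "('c, 'f, 'p) sig \<Rightarrow> ('c, 'f) trm \<Rightarrow> sort option" where
  "tsort S (TV x) = Some (vsort x)"
| "tsort S (TC c) = csig S c"
| "tsort S (TF f ts) = (case fsig S f of None \<Rightarrow> None
     | Some (ss, s) \<Rightarrow> if map (tsort S) ts = map Some ss then Some s else None)"

fun wf_fm :: "('c, 'f, 'p) sig \<Rightarrow> ('c, 'f, 'p) fm \<Rightarrow> bool" where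
  "wf_fm S (Eq t1 t2) = (tsort S t1 \<noteq> None \<and> tsort S t2 \<noteq> None)"
| "wf_fm S (Rel P ts) = (case psig S P of None \<Rightarrow> False
     | Some ss \<Rightarrow> map (tsort S) ts = map Some ss)"
| "wf_fm S (Neg \<phi>) = wf_fm S \<phi>"
| "wf_fm S (Imp \<phi> \<psi>) = (wf_fm S \<phi> \<and> wf_fm S \<psi>)"
| "wf_fm S (All x \<phi>) = wf_fm S \<phi>"
| "wf_fm S (Kn t \<phi>) = (tsort S t = Some Agt \<and> wf_fm S \<phi>)"

fun tvars :: "('c, 'f) trm \<Rightarrow> var set" where
  "tvars (TV x) = {x}"
| "tvars (TC c) = {}"
| "tvars (TF f ts) = \<Union> (set (map tvars ts))"

fun fv :: "('c, 'f, 'p) fm \<Rightarrow> var set" where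
  "fv (Eq t1 t2) = tvars t1 \<union> tvars t2"
| "fv (Rel P ts) = \<Union> (set (map tvars ts))"
| "fv (Neg \<phi>) = fv \<phi>"
| "fv (Imp \<phi> \<psi>) = fv \<phi> \<union> fv \<psi>"
| "fv (All x \<phi>) = fv \<phi> - {x}"
| "fv (Kn t \<phi>) = tvars t \<union> fv \<phi>"

fun substt :: "(var \<Rightarrow> ('c, 'f) trm) \<Rightarrow> ('c, 'f) trm \<Rightarrow> ('c, 'f) trm" where
  "substt \<sigma> (TV x) = \<sigma> x"
| "substt \<sigma> (TC c) = TC c"
| "substt \<sigma> (TF f ts) = TF f (map (substt \<sigma>) ts)"

definition fresh :: "sort \<Rightarrow> var set \<Rightarrow> var" where
  "fresh s X = Vr s (LEAST n. Vr s n \<notin> X)"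

text \<open>Capture-avoiding (simultaneous) substitution: a bound variable is renamed
  (to a fresh variable of the same sort) exactly when it would capture a
  variable of a substituted term.\<close>
fun subst :: "(var \<Rightarrow> ('c, 'f) trm) \<Rightarrow> ('c, 'f, 'p) fm \<Rightarrow> ('c, 'f, 'p) fm" where
  "subst \<sigma> (Eq t1 t2) = Eq (substt \<sigma> t1) (substt \<sigma> t2)"
| "subst \<sigma> (Rel P ts) = Rel P (map (substt \<sigma>) ts)"
| "subst \<sigma> (Neg \<phi>) = Neg (subst \<sigma> \<phi>)"
| "subst \<sigma> (Imp \<phi> \<psi>) = Imp (subst \<sigma> \<phi>) (subst \<sigma> \<psi>)"
| "subst \<sigma> (All z \<phi>) =
     (let X = (\<Union>w \<in> fv (All z \<phi>). tvars (\<sigma> w));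
          z' = (if z \<in> X then fresh (vsort z) X else z)
      in All z' (subst (\<sigma>(z := TV z')) \<phi>))"
| "subst \<sigma> (Kn t \<phi>) = Kn (substt \<sigma> t) (subst \<sigma> \<phi>)"

definition substitute :: "('c, 'f, 'p) fm \<Rightarrow> ('c, 'f) trm \<Rightarrow> var \<Rightarrow> ('c, 'f, 'p) fm" where
  "substitute \<phi> t x = subst (TV(x := t)) \<phi>"

definition conj :: "('c, 'f, 'p) fm \<Rightarrow> ('c, 'f, 'p) fm \<Rightarrow> ('c, 'f, 'p) fm" where
  "conj \<phi> \<psi> = Neg (Imp \<phi> (Neg \<psi>))"

definition disj :: "('c, 'f, 'p) fm \<Rightarrow> ('c, 'f, 'p) fm \<Rightarrow> ('c, 'f, 'p) fm" where
  "disj \<phi> \<psi> = Imp (Neg \<phi>) \<psi>"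

definition Ex :: "var \<Rightarrow> ('c, 'f, 'p) fm \<Rightarrow> ('c, 'f, 'p) fm" where
  "Ex x \<phi> = Neg (All x (Neg \<phi>))"

definition neq :: "('c, 'f) trm \<Rightarrow> ('c, 'f) trm \<Rightarrow> ('c, 'f, 'p) fm" where
  "neq t1 t2 = Neg (Eq t1 t2)"

fun conjs :: "('c, 'f, 'p) fm list \<Rightarrow> ('c, 'f, 'p) fm \<Rightarrow> ('c, 'f, 'p) fm" where
  "conjs [] \<psi> = \<psi>"
| "conjs (\<phi> # \<phi>s) \<psi> = conj \<phi> (conjs \<phi>s \<psi>)"

fun disjs :: "('c, 'f, 'p) fm \<Rightarrow> ('c, 'f, 'p) fm list \<Rightarrow> ('c, 'f, 'p) fm" where
  "disjs \<phi> [] = \<phi>"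
| "disjs \<phi> (\<psi> # \<psi>s) = disj \<phi> (disjs \<psi> \<psi>s)"

fun exs :: "var list \<Rightarrow> ('c, 'f, 'p) fm \<Rightarrow> ('c, 'f, 'p) fm" where
  "exs [] \<phi> = \<phi>"
| "exs (x # xs) \<phi> = Ex x (exs xs \<phi>)"

definition ax_N :: "var list \<Rightarrow> var \<Rightarrow> ('c, 'f, 'p) fm" where
  "ax_N xs y = exs xs
     (conjs [neq (TV (xs ! i)) (TV (xs ! j)). i \<leftarrow> [0..<length xs], j \<leftarrow> [Suc i..<length xs]]
        (All y (disjs (Eq (TV y) (TV (hd xs))) [Eq (TV y) (TV x). x \<leftarrow> tl xs])))"

datatype pfm = PAt nat | PNeg pfm | PImp pfm pfm | PBox nat pfm

fun psat :: "(nat \<Rightarrow> (nat \<times> nat) set) \<Rightarrow> (nat \<Rightarrow> nat set) \<Rightarrow> nat \<Rightarrow> pfm \<Rightarrow> bool" where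
  "psat R V w (PAt n) = (w \<in> V n)"
| "psat R V w (PNeg \<phi>) = (\<not> psat R V w \<phi>)"
| "psat R V w (PImp \<phi> \<psi>) = (psat R V w \<phi> \<longrightarrow> psat R V w \<psi>)"
| "psat R V w (PBox i \<phi>) = (\<forall>w'. (w, w') \<in> R i \<longrightarrow> psat R V w' \<phi>)"

text \<open>Validity in all Kripke models (worlds: any nonempty set of naturals, i.e.
  all countable models, which suffices for propositional modal logic).\<close>
definition pvalid :: "pfm \<Rightarrow> bool" where
  "pvalid \<phi> \<longleftrightarrow> (\<forall>W R V. W \<noteq> {} \<longrightarrow> (\<forall>i. R i \<subseteq> W \<times> W) \<longrightarrow>
                      (\<forall>w \<in> W. psat R V w \<phi>))"

text \<open>Substitution instance: atoms by L-formulas, box indices by (agent) terms.\<close>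
fun pinst :: "(nat \<Rightarrow> ('c, 'f, 'p) fm) \<Rightarrow> (nat \<Rightarrow> ('c, 'f) trm) \<Rightarrow> pfm \<Rightarrow> ('c, 'f, 'p) fm" where
  "pinst \<rho> \<tau> (PAt n) = \<rho> n"
| "pinst \<rho> \<tau> (PNeg \<phi>) = Neg (pinst \<rho> \<tau> \<phi>)"
| "pinst \<rho> \<tau> (PImp \<phi> \<psi>) = Imp (pinst \<rho> \<tau> \<phi>) (pinst \<rho> \<tau> \<psi>)"
| "pinst \<rho> \<tau> (PBox i \<phi>) = Kn (\<tau> i) (pinst \<rho> \<tau> \<phi>)"

inductive ax_KTM :: "('c, 'f, 'p) sig \<Rightarrow> nat \<Rightarrow> ('c, 'f, 'p) fm \<Rightarrow> bool" for S n where
  Taut: "pvalid \<psi> \<Longrightarrow> ax_KTM S n (pinst \<rho> \<tau> \<psi>)"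
| AllE: "vsort y = vsort x \<Longrightarrow> ax_KTM S n (Imp (All x \<phi>) (substitute \<phi> (TV y) x))"
| Id: "ax_KTM S n (Eq t t)"
| MSD: "vsort x = Agt \<Longrightarrow> vsort y = Obj \<Longrightarrow> ax_KTM S n (neq (TV x) (TV y))"
| PS: "ax_KTM S n (Imp (Eq (TV x) (TV y)) (Imp \<phi> (substitute \<phi> (TV y) x)))"
| ExId: "csig S c = Some (vsort x) \<Longrightarrow>
          ax_KTM S n (Imp (Eq (TC c) (TC c)) (Ex x (Eq (TV x) (TC c))))"
| N: "length xs = n \<Longrightarrow> distinct (y # xs) \<Longrightarrow> (\<forall>z \<in> set (y # xs). vsort z = Agt) \<Longrightarrow>
          ax_KTM S n (ax_N xs y)"
| K: "ax_KTM S n (Imp (Kn t (Imp \<phi> \<psi>)) (Imp (Kn t \<phi>) (Kn t \<psi>)))"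
| BF: "x \<notin> tvars t \<Longrightarrow> ax_KTM S n (Imp (All x (Kn t \<phi>)) (Kn t (All x \<phi>)))"
| KNI: "ax_KTM S n (Imp (neq (TV x) (TV y)) (Kn t (neq (TV x) (TV y))))"

text \<open>Theorems; every axiom used must be a (well-formed) formula of L, which in
  particular forces modal indices to be agent-sorted.\<close>
inductive derivable :: "('c, 'f, 'p) sig \<Rightarrow> nat \<Rightarrow> ('c, 'f, 'p) fm \<Rightarrow> bool" for S n where
  Ax: "ax_KTM S n \<phi> \<Longrightarrow> wf_fm S \<phi> \<Longrightarrow> derivable S n \<phi>"
| MP: "derivable S n \<phi> \<Longrightarrow> derivable S n (Imp \<phi> \<psi>) \<Longrightarrow> derivable S n \<psi>"
| KG: "derivable S n \<phi> \<Longrightarrow> tsort S t = Some Agt \<Longrightarrow> derivable S n (Kn t \<phi>)"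
| Gen: "derivable S n (Imp \<phi> \<psi>) \<Longrightarrow> x \<notin> fv \<phi> \<Longrightarrow> derivable S n (Imp \<phi> (All x \<psi>))"

text \<open>DOM = DOM_agt \<sqcup> DOM_obj, with DOM_agt = the agent set (type 'ag).\<close>
datatype ('ag, 'o) dval = AgV 'ag | ObV 'o

fun domS :: "'o set \<Rightarrow> sort \<Rightarrow> ('ag, 'o) dval set" where
  "domS D Agt = range AgV"
| "domS D Obj = ObV ` D"

definition is_frame :: "'w set \<Rightarrow> ('ag \<Rightarrow> ('w \<times> 'w) set) \<Rightarrow> 'o set \<Rightarrow> bool" where
  "is_frame W R D \<longleftrightarrow> W \<noteq> {} \<and> (\<forall>a. R a \<subseteq> W \<times> W) \<and> D \<noteq> {}"

record ('c, 'f, 'p, 'w, 'ag, 'o) interp =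
  Ir :: "'p \<Rightarrow> 'w \<Rightarrow> ('ag, 'o) dval list set"
  If :: "'f \<Rightarrow> 'w \<Rightarrow> ('ag, 'o) dval list set"
  Ic :: "'c \<Rightarrow> 'w \<Rightarrow> ('ag, 'o) dval"

definition sorted_tuple :: "'o set \<Rightarrow> ('ag, 'o) dval list \<Rightarrow> sort list \<Rightarrow> bool" where
  "sorted_tuple D ds ss \<longleftrightarrow> list_all2 (\<lambda>d s. d \<in> domS D s) ds ss"

text \<open>Interpretations; a function symbol is interpreted (at each world) by the graph
  of a total function on the appropriate sorted domains.\<close>
definition is_interp :: "('c, 'f, 'p) sig \<Rightarrow> 'w set \<Rightarrow> 'o set \<Rightarrow>
    ('c, 'f, 'p, 'w, 'ag, 'o) interp \<Rightarrow> bool" where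
  "is_interp S W D I \<longleftrightarrow>
     (\<forall>P ss w. psig S P = Some ss \<longrightarrow> w \<in> W \<longrightarrow> (\<forall>ds \<in> Ir I P w. sorted_tuple D ds ss)) \<and>
     (\<forall>f ss s w. fsig S f = Some (ss, s) \<longrightarrow> w \<in> W \<longrightarrow>
         (\<forall>ds \<in> If I f w. sorted_tuple D ds (ss @ [s])) \<and>
         (\<forall>ds. sorted_tuple D ds ss \<longrightarrow> (\<exists>!d. ds @ [d] \<in> If I f w))) \<and>
     (\<forall>c s w. csig S c = Some s \<longrightarrow> w \<in> W \<longrightarrow> Ic I c w \<in> domS D s)"

definition is_valuation :: "'o set \<Rightarrow> (var \<Rightarrow> ('ag, 'o) dval) \<Rightarrow> bool" where
  "is_valuation D v \<longleftrightarrow> (\<forall>s. v ` {x. vsort x = s} = domS D s)"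

fun teval :: "('c, 'f, 'p, 'w, 'ag, 'o) interp \<Rightarrow> 'w \<Rightarrow> (var \<Rightarrow> ('ag, 'o) dval) \<Rightarrow>
    ('c, 'f) trm \<Rightarrow> ('ag, 'o) dval" where
  "teval I w v (TV x) = v x"
| "teval I w v (TC c) = Ic I c w"
| "teval I w v (TF f ts) = (THE d. map (teval I w v) ts @ [d] \<in> If I f w)"

fun accR :: "('ag \<Rightarrow> ('w \<times> 'w) set) \<Rightarrow> ('ag, 'o) dval \<Rightarrow> ('w \<times> 'w) set" where
  "accR R (AgV a) = R a"
| "accR R (ObV d) = {}"

fun sat :: "('ag \<Rightarrow> ('w \<times> 'w) set) \<Rightarrow> 'o set \<Rightarrow> ('c, 'f, 'p, 'w, 'ag, 'o) interp \<Rightarrow>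
    'w \<Rightarrow> (var \<Rightarrow> ('ag, 'o) dval) \<Rightarrow> ('c, 'f, 'p) fm \<Rightarrow> bool" where
  "sat R D I w v (Eq t1 t2) = (teval I w v t1 = teval I w v t2)"
| "sat R D I w v (Rel P ts) = (map (teval I w v) ts \<in> Ir I P w)"
| "sat R D I w v (Neg \<phi>) = (\<not> sat R D I w v \<phi>)"
| "sat R D I w v (Imp \<phi> \<psi>) = (sat R D I w v \<phi> \<longrightarrow> sat R D I w v \<psi>)"
| "sat R D I w v (All x \<phi>) = (\<forall>d \<in> domS D (vsort x). sat R D I w (v(x := d)) \<phi>)"
| "sat R D I w v (Kn t \<phi>) =
     (\<forall>w'. (w, w') \<in> accR R (teval I w v t) \<longrightarrow> sat R D I w' v \<phi>)"

definition valid_in_frame :: "('c, 'f, 'p) sig \<Rightarrow> 'w set \<Rightarrow> ('ag \<Rightarrow> ('w \<times> 'w) set) \<Rightarrow>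
    'o set \<Rightarrow> ('c, 'f, 'p) fm \<Rightarrow> bool" where
  "valid_in_frame S W R D \<phi> \<longleftrightarrow>
     (\<forall>I :: ('c, 'f, 'p, 'w, 'ag, 'o) interp. is_interp S W D I \<longrightarrow>
        (\<forall>w \<in> W. \<forall>v. is_valuation D v \<longrightarrow> sat R D I w v \<phi>))"

end

theory Submission
  imports Defs
begin

(* The modal tautologies need a detour: pvalid only speaks about models whose worlds are natural
   numbers, and a filtration through the finitely many subformulas transfers it to Kripke models on
   any type; a substitution instance is then true because each K_t is read as the world-dependent
   relation R(t^{w,v}). Axiom (N) holds because DOM_agt is the agent type itself, which has
   exactly n elements. *)

fun psub :: "pfm \<Rightarrow> pfm set" where
  "psub (PAt n) = {PAt n}"
| "psub (PNeg \<phi>) = insert (PNeg \<phi>) (psub \<phi>)"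
| "psub (PImp \<phi> \<psi>) = insert (PImp \<phi> \<psi>) (psub \<phi> \<union> psub \<psi>)"
| "psub (PBox i \<phi>) = insert (PBox i \<phi>) (psub \<phi>)"

lemma finite_psub: "finite (psub \<phi>)"
  by (induction \<phi>) auto

fun kripke_sat :: "(nat \<Rightarrow> ('a \<times> 'a) set) \<Rightarrow> (nat \<Rightarrow> 'a set) \<Rightarrow> 'a \<Rightarrow> pfm \<Rightarrow> bool" where
  "kripke_sat R V w (PAt n) = (w \<in> V n)"
| "kripke_sat R V w (PNeg \<phi>) = (\<not> kripke_sat R V w \<phi>)"
| "kripke_sat R V w (PImp \<phi> \<psi>) = (kripke_sat R V w \<phi> \<longrightarrow> kripke_sat R V w \<psi>)"
| "kripke_sat R V w (PBox i \<phi>) = (\<forall>w'. (w, w') \<in> R i \<longrightarrow> kripke_sat R V w' \<phi>)"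

lemma psat_eq_kripke_sat: "psat R V w \<phi> = kripke_sat R V w \<phi>"
  by (induction \<phi> arbitrary: w) auto

lemma kripke_sat_filtration:
  assumes agree: "\<And>a b \<chi>. h a = h b \<Longrightarrow> \<chi> \<in> psub \<psi> \<Longrightarrow> kripke_sat R V a \<chi> = kripke_sat R V b \<chi>"
  shows "psub \<phi> \<subseteq> psub \<psi> \<Longrightarrow>
    kripke_sat (\<lambda>i. map_prod h h ` R i) (\<lambda>k. h ` V k) (h a) \<phi> = kripke_sat R V a \<phi>"
proof (induction \<phi> arbitrary: a)
  case (PAt k)
  have "a \<in> V k" if "b \<in> V k" "h b = h a" for b
    using agree[OF that(2), of "PAt k"] PAt.prems that(1) by simp
  then show ?case by auto
next
  case (PNeg \<phi>)
  then show ?case by simp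
next
  case (PImp \<phi>1 \<phi>2)
  then show ?case by simp
next
  case (PBox i \<phi>)
  then have IH: "\<And>b. kripke_sat (\<lambda>i. map_prod h h ` R i) (\<lambda>k. h ` V k) (h b) \<phi> = kripke_sat R V b \<phi>"
    and box: "PBox i \<phi> \<in> psub \<psi>" by auto
  show ?case
  proof
    assume box_h: "kripke_sat (\<lambda>i. map_prod h h ` R i) (\<lambda>k. h ` V k) (h a) (PBox i \<phi>)"
    have "kripke_sat R V b \<phi>" if "(a, b) \<in> R i" for b
    proof -
      have "(h a, h b) \<in> map_prod h h ` R i" using that by (rule map_prod_imageI)
      then have "kripke_sat (\<lambda>i. map_prod h h ` R i) (\<lambda>k. h ` V k) (h b) \<phi>"
        using box_h by auto
      then show ?thesis using IH by simp
    qed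
    then show "kripke_sat R V a (PBox i \<phi>)" by simp
  next
    assume a: "kripke_sat R V a (PBox i \<phi>)"
    have "kripke_sat R V b \<phi>" if "(a', b) \<in> R i" "h a' = h a" for a' b
      using agree[OF that(2) box] a that(1) by simp
    then show "kripke_sat (\<lambda>i. map_prod h h ` R i) (\<lambda>k. h ` V k) (h a) (PBox i \<phi>)"
      using IH by auto
  qed
qed

lemma pvalid_imp_kripke_sat:
  assumes "pvalid \<psi>"
  shows "kripke_sat R V a \<psi>"
proof -
  define g where "g u = {\<chi> \<in> psub \<psi>. kripke_sat R V u \<chi>}" for u
  define h where "h = to_nat_on (range g) \<circ> g"
  have "range g \<subseteq> Pow (psub \<psi>)" by (auto simp: g_def)
  then have "countable (range g)"
    by (meson countable_finite finite_Pow_iff finite_psub finite_subset)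
  then have g_eq: "g u = g u'" if "h u = h u'" for u u'
    using that inj_on_to_nat_on unfolding h_def by (auto dest: inj_onD)
  have agree: "kripke_sat R V u \<chi> = kripke_sat R V u' \<chi>"
    if "h u = h u'" "\<chi> \<in> psub \<psi>" for u u' \<chi>
  proof -
    have "kripke_sat R V u \<chi> \<longleftrightarrow> \<chi> \<in> g u" using that(2) by (simp add: g_def)
    also have "\<dots> \<longleftrightarrow> \<chi> \<in> g u'" using g_eq[OF that(1)] by simp
    also have "\<dots> \<longleftrightarrow> kripke_sat R V u' \<chi>" using that(2) by (simp add: g_def)
    finally show ?thesis .
  qed
  have "psat (\<lambda>i. map_prod h h ` R i) (\<lambda>k. h ` V k) (h a) \<psi>"
    using assms unfolding pvalid_def by (auto dest: spec[of _ UNIV])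
  then show ?thesis
    using kripke_sat_filtration[where h = h and \<psi> = \<psi>, OF agree] by (simp add: psat_eq_kripke_sat)
qed

lemma finite_tvars: "finite (tvars t)"
  by (induction t) auto

lemma finite_fv: "finite (fv \<phi>)"
  by (induction \<phi>) (auto simp: finite_tvars)

lemma vsort_fresh: "vsort (fresh s X) = s"
  by (simp add: fresh_def)

lemma fresh_notin:
  assumes "finite X"
  shows "fresh s X \<notin> X"
proof -
  have "infinite (range (Vr s))"
    by (rule range_inj_infinite) (simp add: inj_def)
  then have "\<not> range (Vr s) \<subseteq> X" using assms by (metis finite_subset)
  then have "\<exists>n. Vr s n \<notin> X" by (simp add: image_subset_iff)
  then show ?thesis unfolding fresh_def by (rule LeastI_ex)
qed

lemma teval_cong: "(\<And>x. x \<in> tvars t \<Longrightarrow> v x = v' x) \<Longrightarrow> teval I w v t = teval I w v' t"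
proof (induction t)
  case (TF f ts)
  then have "map (teval I w v) ts = map (teval I w v') ts" by auto
  then show ?case by (simp only: teval.simps)
qed auto

lemma sat_cong: "(\<And>x. x \<in> fv \<phi> \<Longrightarrow> v x = v' x) \<Longrightarrow> sat R D I w v \<phi> = sat R D I w v' \<phi>"
proof (induction \<phi> arbitrary: v v' w)
  case (Eq t1 t2)
  have "teval I w v t1 = teval I w v' t1" "teval I w v t2 = teval I w v' t2"
    using Eq.prems by (auto intro: teval_cong)
  then show ?case by (simp only: sat.simps)
next
  case (Rel P ts)
  then have "map (teval I w v) ts = map (teval I w v') ts"
    by (auto intro: teval_cong)
  then show ?case by (simp only: sat.simps)
next
  case (Neg \<phi>)
  have "sat R D I w v \<phi> = sat R D I w v' \<phi>" using Neg.prems by (intro Neg.IH) simp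
  then show ?case by (simp only: sat.simps)
next
  case (Imp \<phi> \<psi>)
  have "sat R D I w v \<phi> = sat R D I w v' \<phi>" using Imp.prems by (intro Imp.IH) simp
  moreover have "sat R D I w v \<psi> = sat R D I w v' \<psi>" using Imp.prems by (intro Imp.IH) simp
  ultimately show ?case by (simp only: sat.simps)
next
  case (All x \<phi>)
  have "\<And>d. sat R D I w (v(x := d)) \<phi> = sat R D I w (v'(x := d)) \<phi>"
    using All.prems by (intro All.IH) auto
  then show ?case by (simp only: sat.simps)
next
  case (Kn t \<phi>)
  have "teval I w v t = teval I w v' t" using Kn.prems by (intro teval_cong) auto
  moreover have "\<And>w'. sat R D I w' v \<phi> = sat R D I w' v' \<phi>"
    using Kn.prems by (intro Kn.IH) auto
  ultimately show ?case by (simp only: sat.simps)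
qed

lemma teval_substt: "teval I w v (substt \<sigma> t) = teval I w (\<lambda>x. teval I w v (\<sigma> x)) t"
proof (induction t)
  case (TF f ts)
  then have "map (teval I w v \<circ> substt \<sigma>) ts = map (teval I w (\<lambda>x. teval I w v (\<sigma> x))) ts"
    by auto
  then show ?case by (simp only: teval.simps substt.simps map_map)
qed auto

lemma teval_substt_rename: "teval I w v (substt (TV \<circ> f) t) = teval I w (v \<circ> f) t"
  by (simp add: teval_substt comp_def)

(* Constants and function symbols are interpreted world by world, so substituting arbitrary terms
   does not commute with K_t; renamings of variables do. *)
lemma sat_subst_rename:
  fixes \<phi> :: "('c, 'f, 'p) fm"
  shows "sat R D I w v (subst (TV \<circ> f) \<phi>) = sat R D I w (v \<circ> f) \<phi>"
proof (induction \<phi> arbitrary: f v w)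
  case (Eq t1 t2)
  show ?case by (simp only: subst.simps sat.simps teval_substt_rename)
next
  case (Rel P ts)
  have "map (teval I w v \<circ> substt (TV \<circ> f)) ts = map (teval I w (v \<circ> f)) ts"
    by (simp add: teval_substt_rename)
  then show ?case by (simp only: subst.simps sat.simps map_map)
next
  case (Neg \<phi>)
  show ?case by (simp only: subst.simps sat.simps Neg.IH)
next
  case (Imp \<phi> \<psi>)
  show ?case by (simp only: subst.simps sat.simps Imp.IH)
next
  case (All z \<phi>)
  define X where "X = (\<Union>u \<in> fv (All z \<phi>). tvars ((TV \<circ> f) u :: ('c, 'f) trm))"
  define z' where "z' = (if z \<in> X then fresh (vsort z) X else z)"
  have "finite X" unfolding X_def by (intro finite_UN_I finite_fv finite_tvars)
  then have z'_notin: "z' \<notin> X" using fresh_notin by (auto simp: z'_def)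
  have renaming: "(TV \<circ> f)(z := TV z') = TV \<circ> f(z := z')" by auto
  have unfold: "subst (TV \<circ> f) (All z \<phi>) = All z' (subst (TV \<circ> f(z := z')) \<phi>)"
    unfolding renaming[symmetric] by (simp only: subst.simps X_def z'_def Let_def)
  have sort: "vsort z' = vsort z" by (simp add: z'_def vsort_fresh)
  have "sat R D I w (v(z' := d) \<circ> f(z := z')) \<phi> = sat R D I w ((v \<circ> f)(z := d)) \<phi>" for d
    by (rule sat_cong) (use z'_notin in \<open>auto simp: X_def\<close>)
  then show ?case by (simp only: unfold sort sat.simps All.IH)
next
  case (Kn t \<phi>)
  show ?case by (simp only: subst.simps sat.simps Kn.IH teval_substt_rename)
qed

lemma sat_substitute_var: "sat R D I w v (substitute \<phi> (TV y) x) = sat R D I w (v(x := v y)) \<phi>"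
proof -
  have renaming: "TV(x := TV y) = TV \<circ> id(x := y)" by auto
  have "sat R D I w v (substitute \<phi> (TV y) x) = sat R D I w (v \<circ> id(x := y)) \<phi>"
    by (simp only: substitute_def renaming sat_subst_rename)
  also have "v \<circ> id(x := y) = v(x := v y)" by auto
  finally show ?thesis .
qed

lemma kripke_sat_pinst:
  "kripke_sat (\<lambda>i. {(u, u'). (u, u') \<in> accR R (teval I u v (\<tau> i))}) (\<lambda>k. {u. sat R D I u v (\<rho> k)}) u \<psi>
   = sat R D I u v (pinst \<rho> \<tau> \<psi>)"
  by (induction \<psi> arbitrary: u) auto

lemma sat_pinst_pvalid: "pvalid \<psi> \<Longrightarrow> sat R D I w v (pinst \<rho> \<tau> \<psi>)"
  by (simp only: kripke_sat_pinst[symmetric] pvalid_imp_kripke_sat)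

lemma sat_conjs: "sat R D I w v (conjs \<phi>s \<psi>) = ((\<forall>\<phi>\<in>set \<phi>s. sat R D I w v \<phi>) \<and> sat R D I w v \<psi>)"
  by (induction \<phi>s) (auto simp: conj_def)

lemma sat_disjs: "sat R D I w v (disjs \<phi> \<psi>s) = (sat R D I w v \<phi> \<or> (\<exists>\<psi>\<in>set \<psi>s. sat R D I w v \<psi>))"
  by (induction \<psi>s arbitrary: \<phi>) (auto simp: disj_def)

lemma sat_exsI:
  assumes "\<forall>z. z \<notin> set xs \<longrightarrow> v' z = v z" and "\<forall>x \<in> set xs. v' x \<in> domS D (vsort x)"
    and "sat R D I w v' \<phi>"
  shows "sat R D I w v (exs xs \<phi>)"
  using assms
proof (induction xs arbitrary: v)
  case Nil
  then have "v' = v" by auto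
  then show ?case using Nil.prems(3) by simp
next
  case (Cons x xs)
  have "\<forall>z. z \<notin> set xs \<longrightarrow> v' z = (v(x := v' x)) z" using Cons.prems(1) by auto
  then have "sat R D I w (v(x := v' x)) (exs xs \<phi>)" using Cons.IH Cons.prems(2,3) by simp
  moreover have "v' x \<in> domS D (vsort x)" using Cons.prems(2) by simp
  ultimately show ?case by (auto simp: Ex_def)
qed

lemma sat_pairwise_neq:
  assumes "distinct (map v xs)" and "sat R D I w v \<psi>"
  shows "sat R D I w v
    (conjs [neq (TV (xs ! i)) (TV (xs ! j)). i \<leftarrow> [0..<length xs], j \<leftarrow> [Suc i..<length xs]] \<psi>)"
proof -
  have "v (xs ! i) \<noteq> v (xs ! j)" if "i < j" "j < length xs" for i j
    using assms(1) that by (simp add: distinct_conv_nth)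
  then show ?thesis using assms(2) by (auto simp: sat_conjs neq_def Suc_le_eq)
qed

lemma sat_disjs_eq_member:
  assumes "xs \<noteq> []"
  shows "sat R D I w v (disjs (Eq (TV y) (TV (hd xs))) [Eq (TV y) (TV x). x \<leftarrow> tl xs])
    \<longleftrightarrow> v y \<in> v ` set xs"
  using assms by (cases xs) (auto simp: sat_disjs)

lemma ex_fun_upds:
  assumes "distinct xs" and "length ds = length xs"
  shows "\<exists>v'. map v' xs = ds \<and> (\<forall>z. z \<notin> set xs \<longrightarrow> v' z = v z)"
  using assms
proof (induction xs arbitrary: ds)
  case Nil
  show ?case by (intro exI[of _ v]) (use Nil.prems in simp)
next
  case (Cons x xs)
  then obtain d ds' where ds: "ds = d # ds'" by (cases ds) auto
  then obtain v' where "map v' xs = ds'" "\<forall>z. z \<notin> set xs \<longrightarrow> v' z = v z"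
    using Cons by auto
  then show ?case using Cons.prems(1) ds by (intro exI[of _ "v'(x := d)"]) auto
qed

lemma sat_ax_N:
  fixes R :: "'ag::finite \<Rightarrow> ('w \<times> 'w) set" and I :: "('c, 'f, 'p, 'w, 'ag, 'o) interp"
  assumes len: "length xs = card (UNIV :: 'ag set)" and dist: "distinct (y # xs)"
    and agt: "\<forall>z \<in> set (y # xs). vsort z = Agt"
  shows "sat R D I w v (ax_N xs y)"
proof -
  obtain as :: "'ag list" where as: "distinct as" "set as = UNIV"
    using finite_distinct_list[of "UNIV :: 'ag set"] by auto
  then have "length as = length xs" using len distinct_card by fastforce
  then obtain v' where v'_xs: "map v' xs = map AgV as"
    and v'_out: "\<forall>z. z \<notin> set xs \<longrightarrow> v' z = v z"
    using ex_fun_upds[of xs "map AgV as" v] dist by auto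
  have image_v': "v' ` set xs = range AgV"
    using arg_cong[OF v'_xs, of set] as(2) by simp
  have "(v'(y := d)) ` set xs = range AgV" for d
    using image_v' dist by (auto intro: image_cong)
  moreover have "xs \<noteq> []" using len by auto
  ultimately have "sat R D I w (v'(y := d)) (disjs (Eq (TV y) (TV (hd xs))) [Eq (TV y) (TV x). x \<leftarrow> tl xs])"
    if "d \<in> range AgV" for d
    using that by (simp add: sat_disjs_eq_member)
  moreover have "distinct (map v' xs)"
    using v'_xs as(1) by (simp add: distinct_map inj_on_def)
  ultimately have "sat R D I w v' (conjs [neq (TV (xs ! i)) (TV (xs ! j)).
      i \<leftarrow> [0..<length xs], j \<leftarrow> [Suc i..<length xs]]
      (All y (disjs (Eq (TV y) (TV (hd xs))) [Eq (TV y) (TV x). x \<leftarrow> tl xs])))"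
    using agt by (intro sat_pairwise_neq) simp_all
  moreover have "\<forall>x \<in> set xs. v' x \<in> domS D (vsort x)" using image_v' agt by auto
  ultimately show ?thesis unfolding ax_N_def using v'_out by (intro sat_exsI)
qed

lemma accR_subset: "is_frame W R D \<Longrightarrow> accR R d \<subseteq> W \<times> W"
  by (cases d) (auto simp: is_frame_def)

lemma is_valuation_sorted:
  assumes "is_valuation D v"
  shows "v x \<in> domS D (vsort x)"
proof -
  have "v x \<in> v ` {y. vsort y = vsort x}" by simp
  also have "\<dots> = domS D (vsort x)" using assms by (simp add: is_valuation_def)
  finally show ?thesis .
qed

lemma ax_KTM_sound:
  fixes R :: "'ag::finite \<Rightarrow> ('w \<times> 'w) set" and I :: "('c, 'f, 'p, 'w, 'ag, 'o) interp"
  assumes "ax_KTM S (card (UNIV :: 'ag set)) \<phi>" and "is_interp S W D I" and "w \<in> W"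
    and sorted: "\<forall>x. v x \<in> domS D (vsort x)"
  shows "sat R D I w v \<phi>"
  using assms(1)
proof cases
  case (Taut \<psi> \<rho> \<tau>)
  then show ?thesis by (simp add: sat_pinst_pvalid)
next
  case (AllE y x \<phi>)
  then have "v y \<in> domS D (vsort x)" using sorted by metis
  then show ?thesis using AllE(1) by (simp add: sat_substitute_var)
next
  case (Id t)
  then show ?thesis by simp
next
  case (MSD x y)
  then have "v x \<in> range AgV" "v y \<in> ObV ` D" using sorted by (metis domS.simps)+
  then show ?thesis using MSD(1) by (auto simp: neq_def)
next
  case (PS x y \<phi>)
  have "v x = v y \<Longrightarrow> v(x := v y) = v" by auto
  then show ?thesis using PS(1) by (auto simp: sat_substitute_var)
next
  case (ExId c x)
  then have "Ic I c w \<in> domS D (vsort x)" using assms(2,3) unfolding is_interp_def by blast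
  then show ?thesis using ExId(1) by (auto simp: Ex_def)
next
  case (N xs y)
  then show ?thesis by (simp add: sat_ax_N)
next
  case (K t \<phi> \<psi>)
  then show ?thesis by simp
next
  case (BF x t \<phi>)
  then have "teval I w (v(x := d)) t = teval I w v t" for d by (intro teval_cong) auto
  then show ?thesis using BF(1) by auto
next
  case (KNI x y t)
  then show ?thesis by (simp add: neq_def)
qed

lemma derivable_sound:
  fixes R :: "'ag::finite \<Rightarrow> ('w \<times> 'w) set" and I :: "('c, 'f, 'p, 'w, 'ag, 'o) interp"
  assumes "derivable S (card (UNIV :: 'ag set)) \<phi>" and "is_frame W R D" and "is_interp S W D I"
  shows "w \<in> W \<Longrightarrow> \<forall>x. v x \<in> domS D (vsort x) \<Longrightarrow> sat R D I w v \<phi>"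
  using assms(1)
proof (induction arbitrary: w v rule: derivable.induct)
  case (Ax \<phi>)
  then show ?case using assms(3) by (intro ax_KTM_sound)
next
  case (MP \<phi> \<psi>)
  then show ?case by simp
next
  case (KG \<phi> t)
  have "w' \<in> W" if "(w, w') \<in> accR R (teval I w v t)" for w'
    using that accR_subset[OF assms(2)] by blast
  then show ?case using KG by simp
next
  case (Gen \<phi> \<psi> x)
  have "sat R D I w (v(x := d)) \<psi>" if "sat R D I w v \<phi>" "d \<in> domS D (vsort x)" for d
  proof -
    have "sat R D I w (v(x := d)) \<phi> = sat R D I w v \<phi>" using Gen(2) by (intro sat_cong) auto
    then have "sat R D I w (v(x := d)) \<phi>" using that(1) by simp
    moreover have "\<forall>y. (v(x := d)) y \<in> domS D (vsort y)" using Gen.prems that(2) by auto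
    ultimately show ?thesis using Gen.IH Gen.prems(1) by simp
  qed
  then show ?case by simp
qed

theorem theorem6p2:
  fixes S :: "('c, 'f, 'p) sig" and \<phi> :: "('c, 'f, 'p) fm"
    and W :: "'w set" and R :: "'ag::finite \<Rightarrow> ('w \<times> 'w) set" and D :: "'o set"
  assumes "wf_sig S"
    and "wf_fm S \<phi>"
    and "derivable S (card (UNIV :: 'ag set)) \<phi>"
    and "is_frame W R D"
  shows "valid_in_frame S W R D \<phi>"
  unfolding valid_in_frame_def
  using derivable_sound[OF assms(3,4)] is_valuation_sorted by blast

end
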